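(* Let $h>0$, $n\in\mathbb{N}$, and let $\lambda:\mathbb{T}\to\mathbb{R}$ be an $n$-cycle with values $\lambda_0,\dots,\lambda_{n-1}\in\mathbb{R}\setminus\{\pm\tfrac1h\}$, such that $0<|e_{\lambda}(nh)|\neq1$ and $0<|e_{-\lambda}(nh)|\neq1$. Define for $t\in\mathbb{T}$ $$p(t)=\lambda(t+2h),\quad q(t)=\Delta_h\lambda(t+h)-\lambda(t+h)\lambda(t+2h),$$ $$r(t)=\Delta_h^2\lambda(t)-\lambda(t)\Delta_h\lambda(t+h)-\lambda(t)\lambda(t+h)\lambda(t+2h).$$ Then the third-order equation $$\Delta_h^3y(t)+p(t)\Delta_h^2y(t)+q(t)\Delta_h y(t)+r(t)y(t)=0,\qquad t\in\mathbb{T},$$ has Hyers–Ulam stability on $\mathbb{T}$ with Hyers–Ulam stability constant $K=K_0(\lambda)\bigl(K_0(-\lambda)\bigr)^2$.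
   Context: Fix $h>0$ and let $\mathbb{T}=\{0,h,2h,3h,\dots\}$. For $x:\mathbb{T}\to\mathbb{R}$, $\Delta_h x(t)=\frac{x(t+h)-x(t)}{h}$ and $\Delta_h^2x=\Delta_h(\Delta_h x)$, $\Delta_h^3x=\Delta_h(\Delta_h^2 x)$. An $n$-cycle is a function $\mu:\mathbb{T}\to\mathbb{R}$ with $\mu(t)=\mu_k$ whenever $t/h\equiv k\pmod n$, $k\in\{0,\dots,n-1\}$, which has period $n$ and no smaller period. For such $\mu$ define the discrete exponential $e_\mu(t)=\prod_{k=0}^{t/h-1}(1+h\mu(kh))$ (empty product $=1$), so $e_\mu(nh)=\prod_{k=0}^{n-1}(1+h\mu_k)$. For $k\in\{0,\dots,n-1\}$ define $$S_k(\mu)=\sum_{j=1}^{n}\prod_{i=0}^{j-1}\frac{1}{|1+h\mu_{(k+i)\bmod n}|},$$ (e.g. $S_0(\mu)=\frac{1}{|1+h\mu_0|}+\frac{1}{|1+h\mu_0||1+h\mu_1|}+\dots+\frac{1}{|1+h\mu_0|\cdots|1+h\mu_{n-1}|}$), and, when $0<|e_\mu(nh)|\neq1$, $$K_0(\mu)=\frac{h|e_\mu(nh)|}{\bigl|1-|e_\mu(nh)|\bigr|}\max\{S_0(\mu),\dots,S_{n-1}(\mu)\}.$$ Here $-\lambda$ denotes the $n$-cycle with values $-\lambda_0,\dots,-\lambda_{n-1}$. Hyers–Ulam stability: an equation $\mathcal{L}[y](t)=f(t)$, $t\in\mathbb{T}$ (with $\mathcal{L}$ a linear difference operator) has Hyers–Ulam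 stability on $\mathbb{T}$ with Hyers–Ulam stability constant $K>0$ if for every $\varepsilon>0$ and every $\xi:\mathbb{T}\to\mathbb{R}$ with $|\mathcal{L}[\xi](t)-f(t)|\le\varepsilon$ for all $t\in\mathbb{T}$, there is a solution $y:\mathbb{T}\to\mathbb{R}$ of the equation with $|\xi(t)-y(t)|\le K\varepsilon$ for all $t\in\mathbb{T}$. The minimum Hyers–Ulam stability constant is the smallest such $K$. *)

theory Defs
  imports Complex_Main
begin

text \<open>Functions on the time scale T = {0, h, 2h, ...} are represented as functions
  nat \<Rightarrow> real, where index k stands for the point t = k*h.\<close>

definition delta_h :: "real \<Rightarrow> (nat \<Rightarrow> real) \<Rightarrow> nat \<Rightarrow> real" where
  "delta_h h x = (\<lambda>k. (x (Suc k) - x k) / h)"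

definition is_cycle :: "nat \<Rightarrow> (nat \<Rightarrow> real) \<Rightarrow> bool" where
  "is_cycle n \<mu> \<longleftrightarrow> 0 < n \<and> (\<forall>k. \<mu> (k + n) = \<mu> k)
     \<and> (\<forall>m. 0 < m \<and> m < n \<longrightarrow> \<not> (\<forall>k. \<mu> (k + m) = \<mu> k))"

definition e_cyc :: "real \<Rightarrow> nat \<Rightarrow> (nat \<Rightarrow> real) \<Rightarrow> real" where
  "e_cyc h n \<mu> = (\<Prod>k<n. 1 + h * \<mu> k)"

definition S_cyc :: "real \<Rightarrow> nat \<Rightarrow> (nat \<Rightarrow> real) \<Rightarrow> nat \<Rightarrow> real" where
  "S_cyc h n \<mu> k = (\<Sum>j\<in>{1..n}. \<Prod>i<j. 1 / \<bar>1 + h * \<mu> ((k + i) mod n)\<bar>)"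

definition K0 :: "real \<Rightarrow> nat \<Rightarrow> (nat \<Rightarrow> real) \<Rightarrow> real" where
  "K0 h n \<mu> = h * \<bar>e_cyc h n \<mu>\<bar> / \<bar>1 - \<bar>e_cyc h n \<mu>\<bar>\<bar>
      * Max {S_cyc h n \<mu> k | k. k < n}"

definition HU_stable :: "((nat \<Rightarrow> real) \<Rightarrow> nat \<Rightarrow> real) \<Rightarrow> (nat \<Rightarrow> real) \<Rightarrow> real \<Rightarrow> bool" where
  "HU_stable L f K \<longleftrightarrow> K > 0 \<and>
     (\<forall>\<epsilon>>0. \<forall>\<xi>. (\<forall>t. \<bar>L \<xi> t - f t\<bar> \<le> \<epsilon>) \<longrightarrow>
        (\<exists>y. (\<forall>t. L y t = f t) \<and> (\<forall>t. \<bar>\<xi> t - y t\<bar> \<le> K * \<epsilon>)))"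

end

theory Submission
  imports Defs "HOL-Analysis.Analysis"
begin

text \<open>The operator factors as (\<Delta> + \<lambda>(t+2h)) (\<Delta> - \<lambda>(t+h)) (\<Delta> + \<lambda>(t)), so it suffices to
  treat first-order equations \<Delta>y = \<mu> y + f with n-periodic \<mu>, since the stability constants
  of the factors multiply. An approximate solution \<xi> of such an equation is corrected by d
  solving the affine recursion d (k+1) = (1 + h \<mu> k) d k + r k with |r k| \<le> h \<epsilon>. If
  |e_\<mu>(nh)| < 1 the orbit of 0 stays bounded; if |e_\<mu>(nh)| > 1 a bounded orbit is found
  backwards by a nested-compact-sets argument. An n-periodic weight built from the products
  of 1/|1 + h \<mu>| gives the bound K_0(\<mu>) \<epsilon>, and K_0 is invariant under shifting \<mu>.\<close>

lemma periodic_mod: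
  fixes b :: "nat \<Rightarrow> 'a" and n :: nat
  assumes "\<And>k. b (k + n) = b k"
  shows "b (k mod n) = b k"
proof -
  have "b (j + n * q) = b j" for j q
  proof (induction q)
    case (Suc q)
    then show ?case by (metis assms add.assoc add.commute mult_Suc_right)
  qed simp
  then show ?thesis by (metis mod_mult_div_eq add.commute)
qed

lemma prod_periodic_window:
  fixes b :: "nat \<Rightarrow> 'a::comm_monoid_mult"
  assumes "\<And>k. b (k + n) = b k"
  shows "(\<Prod>i<n. b (m + i)) = (\<Prod>i<n. b i)"
proof (induction m)
  case (Suc m)
  define g where "g i = b (m + i)" for i
  have "(\<Prod>i<n. g (Suc i)) = (\<Prod>i<n. g i)"
  proof (cases n)
    case (Suc l)
    have "(\<Prod>i<n. g (Suc i)) = (\<Prod>i\<in>{1..n}. g i)"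
      by (simp add: prod.atLeast1_atMost_eq)
    also have "{1..n} = insert n {1..<n}" using Suc by auto
    also have "(\<Prod>i\<in>insert n {1..<n}. g i) = g 0 * (\<Prod>i\<in>{1..<n}. g i)"
      by (simp add: g_def assms)
    also have "\<dots> = (\<Prod>i\<in>insert 0 {1..<n}. g i)" by simp
    also have "insert 0 {1..<n} = {..<n}" using Suc by auto
    finally show ?thesis .
  qed simp
  then show ?case using Suc by (simp add: g_def)
qed simp

fun affine_rec :: "(nat \<Rightarrow> real) \<Rightarrow> (nat \<Rightarrow> real) \<Rightarrow> real \<Rightarrow> nat \<Rightarrow> real" where
  "affine_rec a r x 0 = x"
| "affine_rec a r x (Suc k) = a k * affine_rec a r x k + r k"

lemma continuous_on_affine_rec: "continuous_on UNIV (\<lambda>x. affine_rec a r x k)"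
  by (induction k) (auto intro!: continuous_intros)

lemma affine_rec_forward_bound:
  assumes B: "\<And>k. B (Suc k) = \<bar>a k\<bar> * B k + \<delta>" and "B 0 \<ge> 0"
    and r: "\<And>k. \<bar>r k\<bar> \<le> \<delta>"
  shows "\<bar>affine_rec a r 0 k\<bar> \<le> B k"
proof (induction k)
  case (Suc k)
  have "\<bar>affine_rec a r 0 (Suc k)\<bar> \<le> \<bar>a k\<bar> * \<bar>affine_rec a r 0 k\<bar> + \<bar>r k\<bar>"
    by (simp add: abs_mult[symmetric] abs_triangle_ineq)
  also have "\<dots> \<le> \<bar>a k\<bar> * B k + \<delta>"
    using Suc r[of k] by (intro add_mono mult_left_mono) auto
  finally show ?case using B by simp
qed (simp add: assms)

lemma affine_rec_reaches:
  assumes a: "\<And>k. a k \<noteq> 0" and B: "\<And>k. \<bar>a k\<bar> * B k = B (Suc k) + \<delta>"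
    and r: "\<And>k. \<bar>r k\<bar> \<le> \<delta>" and v: "\<bar>v\<bar> \<le> B N"
  shows "\<exists>x. affine_rec a r x N = v \<and> (\<forall>k\<le>N. \<bar>affine_rec a r x k\<bar> \<le> B k)"
  using v
proof (induction N arbitrary: v)
  case 0
  then show ?case by (intro exI[of _ v]) auto
next
  case (Suc N)
  define w where "w = (v - r N) / a N"
  have aw: "a N * w = v - r N" using a[of N] by (simp add: w_def)
  have "\<bar>a N\<bar> * \<bar>w\<bar> = \<bar>v - r N\<bar>" using aw by (metis abs_mult)
  also have "\<dots> \<le> \<bar>a N\<bar> * B N" using Suc.prems r[of N] B[of N] by linarith
  finally have "\<bar>w\<bar> \<le> B N" using a[of N] by simp
  then obtain x where x: "affine_rec a r x N = w" "\<forall>k\<le>N. \<bar>affine_rec a r x k\<bar> \<le> B k"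
    using Suc.IH by blast
  have "affine_rec a r x (Suc N) = v" using x(1) aw by simp
  then show ?case using x Suc.prems by (intro exI[of _ x]) (auto simp: le_Suc_eq)
qed

text \<open>The initial values whose orbit stays below B up to time N form nonempty nested compact
  sets.\<close>
lemma affine_rec_backward_bound:
  assumes a: "\<And>k. a k \<noteq> 0" and B: "\<And>k. \<bar>a k\<bar> * B k = B (Suc k) + \<delta>"
    and r: "\<And>k. \<bar>r k\<bar> \<le> \<delta>" and B_nonneg: "\<And>k. B k \<ge> 0"
  shows "\<exists>x. \<forall>k. \<bar>affine_rec a r x k\<bar> \<le> B k"
proof -
  define S where "S N = {x. \<forall>k\<le>N. \<bar>affine_rec a r x k\<bar> \<le> B k}" for N
  have "closed (S N)" for N
  proof -
    have "S N = (\<Inter>k\<le>N. {x. \<bar>affine_rec a r x k\<bar> \<le> B k})" by (auto simp: S_def)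
    moreover have "closed {x. \<bar>affine_rec a r x k\<bar> \<le> B k}" for k
      by (intro closed_Collect_le continuous_intros continuous_on_affine_rec)
    ultimately show ?thesis by auto
  qed
  moreover have "S N \<noteq> {}" for N
    using affine_rec_reaches[of a B \<delta> r 0 N] a B r B_nonneg[of N] unfolding S_def by auto
  moreover have "S N \<subseteq> S m" if "m \<le> N" for m N using that by (auto simp: S_def)
  moreover have "bounded (S 0)"
    by (rule bounded_subset[OF bounded_cball[of 0 "B 0"]]) (auto simp: S_def)
  ultimately obtain x where "\<And>N. x \<in> S N" using bounded_closed_nest[of S] by metis
  then show ?thesis unfolding S_def by blast
qed

definition weight_sum :: "(nat \<Rightarrow> real) \<Rightarrow> nat \<Rightarrow> nat \<Rightarrow> real" where
  "weight_sum a n k = (\<Sum>j\<in>{1..n}. \<Prod>i<j. 1 / \<bar>a (k + i)\<bar>)"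

lemma weight_sum_nonneg: "weight_sum a n k \<ge> 0"
  by (simp add: weight_sum_def sum_nonneg prod_nonneg)

lemma weight_sum_step:
  assumes per: "\<And>k. a (k + n) = a k" and a: "\<And>k. a k \<noteq> 0"
  shows "\<bar>a k\<bar> * weight_sum a n k = 1 + weight_sum a n (Suc k) - 1 / \<bar>\<Prod>i<n. a i\<bar>"
proof -
  define c where "c j = (\<Prod>i<j. 1 / \<bar>a (Suc k + i)\<bar>)" for j
  have W: "weight_sum a n m = (\<Sum>j<n. \<Prod>i<Suc j. 1 / \<bar>a (m + i)\<bar>)" for m
    by (simp add: weight_sum_def sum.atLeast1_atMost_eq)
  have "weight_sum a n k = 1 / \<bar>a k\<bar> * (\<Sum>j<n. c j)"
    unfolding W c_def prod.lessThan_Suc_shift by (simp add: sum_distrib_left)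
  moreover have "weight_sum a n (Suc k) = (\<Sum>j<n. c (Suc j))"
    unfolding W c_def by simp
  moreover have "c n = 1 / \<bar>\<Prod>i<n. a i\<bar>"
    using prod_periodic_window[of a n "Suc k", OF per]
    by (simp add: c_def prod_dividef abs_prod[symmetric])
  moreover have "(\<Sum>j<n. c j) + c n = c 0 + (\<Sum>j<n. c (Suc j))"
    by (metis sum.lessThan_Suc sum.lessThan_Suc_shift)
  ultimately show ?thesis using a[of k] by (simp add: c_def)
qed

text \<open>With c = \<delta> E / |E - 1|, the bound B = c \<cdot> weight_sum a n satisfies
  B (k+1) = |a k| B k + \<delta> if E < 1 and |a k| B k = B (k+1) + \<delta> if E > 1.\<close>
lemma affine_rec_periodic_bounded:
  fixes a r :: "nat \<Rightarrow> real"
  assumes per: "\<And>k. a (k + n) = a k" and a: "\<And>k. a k \<noteq> 0"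
    and E: "\<bar>\<Prod>i<n. a i\<bar> \<noteq> 1" and r: "\<And>k. \<bar>r k\<bar> \<le> \<delta>"
  shows "\<exists>x. \<forall>k. \<bar>affine_rec a r x k\<bar>
           \<le> \<delta> * \<bar>\<Prod>i<n. a i\<bar> / \<bar>\<bar>\<Prod>i<n. a i\<bar> - 1\<bar> * weight_sum a n k"
proof -
  define E where "E = \<bar>\<Prod>i<n. a i\<bar>"
  define c where "c = \<delta> * E / \<bar>E - 1\<bar>"
  define B where "B k = c * weight_sum a n k" for k
  have "E > 0" using a by (simp add: E_def prod_zero_iff)
  have "\<delta> \<ge> 0" using r[of 0] by linarith
  then have B_nonneg: "B k \<ge> 0" for k
    using \<open>E > 0\<close> by (simp add: B_def c_def weight_sum_nonneg)
  have B_step: "\<bar>a k\<bar> * B k = B (Suc k) + c * (1 - 1 / E)" for k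
  proof -
    have "\<bar>a k\<bar> * B k = c * (1 + weight_sum a n (Suc k) - 1 / E)"
      using weight_sum_step[of a n k] per a by (simp add: B_def E_def)
    then show ?thesis by (simp add: B_def algebra_simps)
  qed
  show ?thesis
  proof (cases "E < 1")
    case True
    then have "c * (1 - 1 / E) = - \<delta>"
      using \<open>E > 0\<close> by (simp add: c_def divide_simps) (simp add: algebra_simps)
    then have "B (Suc k) = \<bar>a k\<bar> * B k + \<delta>" for k using B_step[of k] by linarith
    then have "\<bar>affine_rec a r 0 k\<bar> \<le> B k" for k
      by (rule affine_rec_forward_bound) (simp_all add: B_nonneg r)
    then show ?thesis by (auto simp: B_def c_def E_def)
  next
    case False
    then have "E > 1" using E by (simp add: E_def)
    then have "c * (1 - 1 / E) = \<delta>" by (simp add: c_def divide_simps)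
    then have "\<bar>a k\<bar> * B k = B (Suc k) + \<delta>" for k using B_step[of k] by linarith
    then show ?thesis
      using affine_rec_backward_bound[of a B \<delta> r] a r B_nonneg by (auto simp: B_def c_def E_def)
  qed
qed

definition first_order_op :: "real \<Rightarrow> (nat \<Rightarrow> real) \<Rightarrow> (nat \<Rightarrow> real) \<Rightarrow> nat \<Rightarrow> real" where
  "first_order_op h \<mu> y = (\<lambda>k. delta_h h y k - \<mu> k * y k)"

text \<open>Unlike HU_stable, one constant serves every right-hand side (and need not be positive),
  which is what makes the notion closed under composition of operators.\<close>
definition uniformly_HU_stable :: "((nat \<Rightarrow> real) \<Rightarrow> nat \<Rightarrow> real) \<Rightarrow> real \<Rightarrow> bool" where
  "uniformly_HU_stable L K \<longleftrightarrow>
     (\<forall>\<epsilon>\<ge>0. \<forall>\<xi> f. (\<forall>k. \<bar>L \<xi> k - f k\<bar> \<le> \<epsilon>) \<longrightarrow>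
        (\<exists>y. (\<forall>k. L y k = f k) \<and> (\<forall>k. \<bar>\<xi> k - y k\<bar> \<le> K * \<epsilon>)))"

lemma HU_stable_if_uniformly_HU_stable:
  assumes "uniformly_HU_stable L K" "K > 0"
  shows "HU_stable L f K"
  using assms by (auto simp: HU_stable_def uniformly_HU_stable_def)

lemma uniformly_HU_stable_comp:
  assumes inner: "uniformly_HU_stable L\<^sub>1 K\<^sub>1" and outer: "uniformly_HU_stable L\<^sub>2 K\<^sub>2"
    and "K\<^sub>2 \<ge> 0"
  shows "uniformly_HU_stable (\<lambda>y. L\<^sub>2 (L\<^sub>1 y)) (K\<^sub>1 * K\<^sub>2)"
  unfolding uniformly_HU_stable_def
proof (intro allI impI)
  fix \<epsilon> :: real and \<xi> f
  assume "\<epsilon> \<ge> 0" and "\<forall>k. \<bar>L\<^sub>2 (L\<^sub>1 \<xi>) k - f k\<bar> \<le> \<epsilon>"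
  then obtain z where z: "\<forall>k. L\<^sub>2 z k = f k" "\<forall>k. \<bar>L\<^sub>1 \<xi> k - z k\<bar> \<le> K\<^sub>2 * \<epsilon>"
    using outer unfolding uniformly_HU_stable_def by blast
  moreover have "K\<^sub>2 * \<epsilon> \<ge> 0" using \<open>K\<^sub>2 \<ge> 0\<close> \<open>\<epsilon> \<ge> 0\<close> by simp
  ultimately obtain y where "\<forall>k. L\<^sub>1 y k = z k" "\<forall>k. \<bar>\<xi> k - y k\<bar> \<le> K\<^sub>1 * (K\<^sub>2 * \<epsilon>)"
    using inner unfolding uniformly_HU_stable_def by blast
  with z show "\<exists>y. (\<forall>k. L\<^sub>2 (L\<^sub>1 y) k = f k) \<and> (\<forall>k. \<bar>\<xi> k - y k\<bar> \<le> K\<^sub>1 * K\<^sub>2 * \<epsilon>)"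
    by (metis ext mult.assoc)
qed

lemma S_cyc_mod: "S_cyc h n \<mu> (k mod n) = S_cyc h n \<mu> k"
  by (simp add: S_cyc_def mod_add_left_eq)

lemma S_cyc_set_eq_range:
  assumes "n > 0"
  shows "{S_cyc h n \<mu> k | k. k < n} = range (S_cyc h n \<mu>)"
  using assms by (auto, metis S_cyc_mod mod_less_divisor)

lemma S_cyc_eq_weight_sum:
  assumes "\<And>k. \<mu> (k + n) = \<mu> k"
  shows "S_cyc h n \<mu> k = weight_sum (\<lambda>k. 1 + h * \<mu> k) n k"
  by (simp add: S_cyc_def weight_sum_def periodic_mod[of \<mu>, OF assms])

lemma e_cyc_shift:
  assumes "\<And>k. \<mu> (k + n) = \<mu> k"
  shows "e_cyc h n (\<lambda>k. \<mu> (k + s)) = e_cyc h n \<mu>"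
  using prod_periodic_window[of "\<lambda>k. 1 + h * \<mu> k" n s] assms
  by (simp add: e_cyc_def add.commute)

lemma K0_shift:
  assumes per: "\<And>k. \<mu> (k + n) = \<mu> k"
  shows "K0 h n (\<lambda>k. \<mu> (k + s)) = K0 h n \<mu>"
proof (cases "n > 0")
  case True
  have per_shift: "\<mu> (j mod n + s) = \<mu> (j + s)" for j
    using periodic_mod[of "\<lambda>k. \<mu> (k + s)" n j] per by (metis add.assoc add.commute)
  have S_shift: "S_cyc h n (\<lambda>k. \<mu> (k + s)) k = S_cyc h n \<mu> (k + s)" for k
    unfolding S_cyc_def per_shift periodic_mod[of \<mu>, OF per] by (simp add: add_ac)
  have "S_cyc h n \<mu> j = S_cyc h n \<mu> (j + n * s - s + s)" for j
  proof -
    have "s \<le> n * s" using True by simp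
    then have "j + n * s - s + s = j + n * s" by linarith
    then show ?thesis by (metis S_cyc_mod mod_mult_self1 mult.commute)
  qed
  then have "range (\<lambda>k. S_cyc h n \<mu> (k + s)) = range (S_cyc h n \<mu>)" by blast
  then have "range (S_cyc h n (\<lambda>k. \<mu> (k + s))) = range (S_cyc h n \<mu>)"
    by (simp add: S_shift)
  then have "{S_cyc h n (\<lambda>k. \<mu> (k + s)) k | k. k < n} = {S_cyc h n \<mu> k | k. k < n}"
    by (simp only: S_cyc_set_eq_range[OF True])
  then show ?thesis by (simp add: K0_def e_cyc_shift[of \<mu> n] per)
qed (simp add: K0_def e_cyc_def)

text \<open>With y = \<xi> - d the equation for y becomes the affine recursion
  d (k+1) = (1 + h \<mu> k) d k + h (first_order_op h \<mu> \<xi> k - f k) for the correction d.\<close>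
lemma first_order_uniformly_HU_stable:
  fixes h :: real and \<mu> :: "nat \<Rightarrow> real"
  assumes h: "h > 0" and per: "\<And>k. \<mu> (k + n) = \<mu> k" and nz: "\<And>k. 1 + h * \<mu> k \<noteq> 0"
    and E: "\<bar>e_cyc h n \<mu>\<bar> \<noteq> 1"
  shows "uniformly_HU_stable (first_order_op h \<mu>) (K0 h n \<mu>)"
  unfolding uniformly_HU_stable_def
proof (intro allI impI)
  fix \<epsilon> :: real and \<xi> f :: "nat \<Rightarrow> real"
  assume "\<epsilon> \<ge> 0" and approx: "\<forall>k. \<bar>first_order_op h \<mu> \<xi> k - f k\<bar> \<le> \<epsilon>"
  define a where "a = (\<lambda>k. 1 + h * \<mu> k)"
  define r where "r k = h * (first_order_op h \<mu> \<xi> k - f k)" for k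
  have n: "n > 0" using E by (cases n) (simp_all add: e_cyc_def)
  have "\<bar>r k\<bar> \<le> h * \<epsilon>" for k using approx h by (simp add: r_def abs_mult)
  then obtain x where x: "\<forall>k. \<bar>affine_rec a r x k\<bar>
      \<le> h * \<epsilon> * \<bar>e_cyc h n \<mu>\<bar> / \<bar>\<bar>e_cyc h n \<mu>\<bar> - 1\<bar> * weight_sum a n k"
    using affine_rec_periodic_bounded[of a n r "h * \<epsilon>"] per nz E
    by (auto simp: a_def e_cyc_def)
  define y where "y k = \<xi> k - affine_rec a r x k" for k
  have "first_order_op h \<mu> y k = f k" for k
    using h by (simp add: y_def first_order_op_def delta_h_def a_def r_def field_simps)
  moreover have "\<bar>\<xi> k - y k\<bar> \<le> K0 h n \<mu> * \<epsilon>" for k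
  proof -
    have "weight_sum a n k = S_cyc h n \<mu> (k mod n)"
      using S_cyc_eq_weight_sum[of \<mu> n h k] per by (simp add: a_def S_cyc_mod)
    also have "\<dots> \<le> Max {S_cyc h n \<mu> j | j. j < n}"
      using n by (intro Max_ge) auto
    finally have "weight_sum a n k \<le> Max {S_cyc h n \<mu> j | j. j < n}" .
    then have "\<bar>affine_rec a r x k\<bar> \<le> h * \<epsilon> * \<bar>e_cyc h n \<mu>\<bar> / \<bar>\<bar>e_cyc h n \<mu>\<bar> - 1\<bar>
        * Max {S_cyc h n \<mu> j | j. j < n}"
      using x h \<open>\<epsilon> \<ge> 0\<close> by (meson order_trans mult_left_mono divide_nonneg_nonneg
          mult_nonneg_nonneg abs_ge_zero less_imp_le)
    then show ?thesis by (simp add: y_def K0_def abs_minus_commute algebra_simps)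
  qed
  ultimately show "\<exists>y. (\<forall>k. first_order_op h \<mu> y k = f k) \<and> (\<forall>k. \<bar>\<xi> k - y k\<bar> \<le> K0 h n \<mu> * \<epsilon>)"
    by blast
qed

lemma K0_pos:
  assumes "h > 0" and "\<And>k. 1 + h * \<mu> k \<noteq> 0"
    and "0 < \<bar>e_cyc h n \<mu>\<bar>" "\<bar>e_cyc h n \<mu>\<bar> \<noteq> 1"
  shows "K0 h n \<mu> > 0"
proof -
  have "n > 0" using assms(4) by (cases n) (simp_all add: e_cyc_def)
  then have "0 < S_cyc h n \<mu> 0"
    using assms(2) by (auto simp: S_cyc_def intro!: sum_pos prod_pos)
  also have "\<dots> \<le> Max {S_cyc h n \<mu> k | k. k < n}"
    using \<open>n > 0\<close> by (intro Max_ge) auto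
  finally show ?thesis using assms by (simp add: K0_def)
qed

lemma third_order_op_factorization:
  fixes h :: real and lam y :: "nat \<Rightarrow> real"
  assumes "h \<noteq> 0"
  shows "delta_h h (delta_h h (delta_h h y)) k + lam (k + 2) * delta_h h (delta_h h y) k
       + (delta_h h lam (k + 1) - lam (k + 1) * lam (k + 2)) * delta_h h y k
       + (delta_h h (delta_h h lam) k - lam k * delta_h h lam (k + 1)
                 - lam k * lam (k + 1) * lam (k + 2)) * y k
     = first_order_op h (\<lambda>k. - lam (k + 2))
         (first_order_op h (\<lambda>k. lam (k + 1)) (first_order_op h (\<lambda>k. - lam k) y)) k"
  using assms by (simp add: first_order_op_def delta_h_def field_simps)

lemma first_order_uniformly_HU_stable_shift:
  fixes h :: real and \<mu> :: "nat \<Rightarrow> real"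
  assumes "h > 0" and per: "\<And>k. \<mu> (k + n) = \<mu> k" and "\<And>k. 1 + h * \<mu> k \<noteq> 0"
    and "\<bar>e_cyc h n \<mu>\<bar> \<noteq> 1"
  shows "uniformly_HU_stable (first_order_op h (\<lambda>k. \<mu> (k + s))) (K0 h n \<mu>)"
proof -
  have "\<mu> (k + n + s) = \<mu> (k + s)" for k by (metis per add.assoc add.commute)
  then show ?thesis
    using first_order_uniformly_HU_stable[of h "\<lambda>k. \<mu> (k + s)" n] assms
    by (simp add: K0_shift e_cyc_shift per)
qed

theorem theorem5p4:
  fixes h :: real and n :: nat and lam :: "nat \<Rightarrow> real"
  assumes hpos: "h > 0"
    and cyc: "is_cycle n lam"
    and vals: "\<forall>k. lam k \<noteq> 1 / h \<and> lam k \<noteq> - (1 / h)"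
    and e1: "0 < \<bar>e_cyc h n lam\<bar>" "\<bar>e_cyc h n lam\<bar> \<noteq> 1"
    and e2: "0 < \<bar>e_cyc h n (\<lambda>k. - lam k)\<bar>" "\<bar>e_cyc h n (\<lambda>k. - lam k)\<bar> \<noteq> 1"
  defines "p \<equiv> \<lambda>k. lam (k + 2)"
    and "q \<equiv> \<lambda>k. delta_h h lam (k + 1) - lam (k + 1) * lam (k + 2)"
    and "r \<equiv> \<lambda>k. delta_h h (delta_h h lam) k - lam k * delta_h h lam (k + 1)
                 - lam k * lam (k + 1) * lam (k + 2)"
  shows "HU_stable
           (\<lambda>y k. delta_h h (delta_h h (delta_h h y)) k + p k * delta_h h (delta_h h y) k
                   + q k * delta_h h y k + r k * y k)
           (\<lambda>k. 0)
           (K0 h n lam * (K0 h n (\<lambda>k. - lam k))^2)"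
proof -
  have per: "\<And>k. lam (k + n) = lam k" using cyc by (simp add: is_cycle_def)
  have nz: "1 + h * lam k \<noteq> 0" "1 + h * - lam k \<noteq> 0" for k
    using vals[rule_format, of k] hpos by (auto simp: field_simps)
  have K: "K0 h n lam > 0" "K0 h n (\<lambda>k. - lam k) > 0"
    by (rule K0_pos; use hpos nz e1 e2 in simp)+
  have L: "uniformly_HU_stable (first_order_op h (\<lambda>k. - lam (k + s))) (K0 h n (\<lambda>k. - lam k))"
    "uniformly_HU_stable (first_order_op h (\<lambda>k. lam (k + s))) (K0 h n lam)" for s
    using first_order_uniformly_HU_stable_shift[of h "\<lambda>k. - lam k" n]
      first_order_uniformly_HU_stable_shift[of h lam n] hpos per nz e1 e2 by auto
  have op: "(\<lambda>y k. delta_h h (delta_h h (delta_h h y)) k + p k * delta_h h (delta_h h y) k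
      + q k * delta_h h y k + r k * y k) = (\<lambda>y. first_order_op h (\<lambda>k. - lam (k + 2))
      (first_order_op h (\<lambda>k. lam (k + 1)) (first_order_op h (\<lambda>k. - lam k) y)))"
    unfolding p_def q_def r_def using hpos by (intro ext third_order_op_factorization) simp
  have "uniformly_HU_stable (\<lambda>y. first_order_op h (\<lambda>k. - lam (k + 2))
      (first_order_op h (\<lambda>k. lam (k + 1)) (first_order_op h (\<lambda>k. - lam k) y)))
      (K0 h n lam * (K0 h n (\<lambda>k. - lam k))^2)"
    using uniformly_HU_stable_comp[OF uniformly_HU_stable_comp[OF L(1)[of 0] L(2)[of 1]] L(1)[of 2]]
      K by (simp add: power2_eq_square ac_simps)
  then show ?thesis
    unfolding op using K by (intro HU_stable_if_uniformly_HU_stable) simp_all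
qed

end
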